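(* Let $G$ be a group. If the set $\{x\in G:x^3=1\}$ is $7$-large in $G$, then $G$ is $2$-Engel, i.e. $[x,y,y]=1$ for all $x,y\in G$.
   Context: $[x,y]=x^{-1}y^{-1}xy$ and $[x,y,z]=[[x,y],z]$. A subset $X\subseteq G$ is $k$-large in $G$ if the intersection of any $k$ left translates $g_1X\cap\dots\cap g_kX$ ($g_i\in G$) is non-empty. *)

theory Defs
  imports "HOL-Algebra.Coset"
begin

definition comm :: "('a, 'b) monoid_scheme \<Rightarrow> 'a \<Rightarrow> 'a \<Rightarrow> 'a" where
  "comm G x y = inv\<^bsub>G\<^esub> x \<otimes>\<^bsub>G\<^esub> inv\<^bsub>G\<^esub> y \<otimes>\<^bsub>G\<^esub> x \<otimes>\<^bsub>G\<^esub> y"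

definition comm3 :: "('a, 'b) monoid_scheme \<Rightarrow> 'a \<Rightarrow> 'a \<Rightarrow> 'a \<Rightarrow> 'a" where
  "comm3 G x y z = comm G (comm G x y) z"

definition k_large :: "nat \<Rightarrow> ('a, 'b) monoid_scheme \<Rightarrow> 'a set \<Rightarrow> bool" where
  "k_large k G X \<longleftrightarrow>
     (\<forall>g. (\<forall>i<k. g i \<in> carrier G) \<longrightarrow> (\<Inter>i<k. g i <#\<^bsub>G\<^esub> X) \<noteq> {})"

definition two_engel :: "('a, 'b) monoid_scheme \<Rightarrow> bool" where
  "two_engel G \<longleftrightarrow> (\<forall>x\<in>carrier G. \<forall>y\<in>carrier G. comm3 G x y y = \<one>\<^bsub>G\<^esub>)"

end

theory Submission
  imports Defs
begin

(* Seven left translates of the set of elements of order dividing 3, by the inverses of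
   1, y, y^-1, x, yx, xy, yxy, have a common point t.  Then t^3 = 1 and (wt)^3 = 1 for these w,
   and since (wt)^3 = w (\<sigma> w) (\<sigma>^2 w) t^3 for the inner automorphism \<sigma> u = t u t^-1,
   \<sigma> splits the six elements y, y^-1, x, yx, xy, yxy.  Splitting y and y^-1 makes y, \<sigma> y,
   \<sigma>^2 y commute; conjugating these relations by x and by x (\<sigma> x) = (\<sigma>^2 x)^-1 and
   eliminating in the three relations coming from yx, xy, yxy shows that y commutes with x y x^-1.
   For x^-1 in place of x this says that y commutes with y^x, hence with [x,y] = (y^x)^-1 y. *)

context group
begin

lemma inv_mult_cancel_left [simp]:
  "x \<in> carrier G \<Longrightarrow> y \<in> carrier G \<Longrightarrow> inv x \<otimes> (x \<otimes> y) = y"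
  by (simp flip: m_assoc)

lemma mult_inv_cancel_left [simp]:
  "x \<in> carrier G \<Longrightarrow> y \<in> carrier G \<Longrightarrow> x \<otimes> (inv x \<otimes> y) = y"
  by (simp flip: m_assoc)

lemma inv_eq_if_mult_eq_one:
  "x \<otimes> y = \<one> \<Longrightarrow> x \<in> carrier G \<Longrightarrow> y \<in> carrier G \<Longrightarrow> inv x = y"
  by (metis inv_comm inv_equality)

lemma commute_inv:
  assumes "a \<otimes> b = b \<otimes> a" "a \<in> carrier G" "b \<in> carrier G"
  shows "a \<otimes> inv b = inv b \<otimes> a"
  by (metis assms inv_solve_left inv_solve_right' m_assoc m_closed inv_closed)

lemma mult3_eq_one_rotate:
  assumes "a \<otimes> b \<otimes> c = \<one>" "a \<in> carrier G" "b \<in> carrier G" "c \<in> carrier G"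
  shows "b \<otimes> c \<otimes> a = \<one>"
  using inv_comm[of a "b \<otimes> c"] assms by (simp add: m_assoc)

lemma commute_if_mult3_eq_one_reverse:
  assumes "a \<otimes> b \<otimes> c = \<one>" "c \<otimes> b \<otimes> a = \<one>"
    and "a \<in> carrier G" "b \<in> carrier G" "c \<in> carrier G"
  shows "a \<otimes> b = b \<otimes> a"
proof -
  have "b \<otimes> a \<otimes> c = \<one>"
    using mult3_eq_one_rotate[OF assms(2)] assms by simp
  with assms show ?thesis
    using inv_equality[of "a \<otimes> b" c] inv_equality[of "b \<otimes> a" c] by simp
qed

lemma comm_closed [simp]:
  "x \<in> carrier G \<Longrightarrow> y \<in> carrier G \<Longrightarrow> comm G x y \<in> carrier G"
  by (simp add: comm_def)

lemma comm_eq_one_iff_commute: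
  "x \<in> carrier G \<Longrightarrow> y \<in> carrier G \<Longrightarrow> comm G x y = \<one> \<longleftrightarrow> x \<otimes> y = y \<otimes> x"
  using inv_solve_left'[of \<one> "y \<otimes> x" "x \<otimes> y"] by (simp add: comm_def inv_mult_group m_assoc)

definition conjugate :: "'a \<Rightarrow> 'a \<Rightarrow> 'a" where
  "conjugate g u = g \<otimes> u \<otimes> inv g"

lemma conjugate_closed [simp]:
  "g \<in> carrier G \<Longrightarrow> u \<in> carrier G \<Longrightarrow> conjugate g u \<in> carrier G"
  by (simp add: conjugate_def)

lemma conjugate_mult:
  "g \<in> carrier G \<Longrightarrow> a \<in> carrier G \<Longrightarrow> b \<in> carrier G \<Longrightarrow>
    conjugate g (a \<otimes> b) = conjugate g a \<otimes> conjugate g b"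
  by (simp add: conjugate_def m_assoc)

lemma conjugate_inv:
  "g \<in> carrier G \<Longrightarrow> u \<in> carrier G \<Longrightarrow> inv (conjugate g u) = conjugate g (inv u)"
  by (simp add: conjugate_def inv_mult_group m_assoc)

lemma conjugate_one: "g \<in> carrier G \<Longrightarrow> conjugate g \<one> = \<one>"
  by (simp add: conjugate_def)

lemma conjugate_hom: "g \<in> carrier G \<Longrightarrow> conjugate g \<in> hom G G"
  by (rule homI) (simp_all add: conjugate_def m_assoc)

lemma conjugate_mult3_eq_one:
  assumes "a \<otimes> b \<otimes> c = \<one>" "g \<in> carrier G" "a \<in> carrier G" "b \<in> carrier G" "c \<in> carrier G"
  shows "conjugate g a \<otimes> conjugate g b \<otimes> conjugate g c = \<one>"
  using assms by (simp add: conjugate_one flip: conjugate_mult)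

lemma conjugate_commute:
  assumes "a \<otimes> b = b \<otimes> a" "g \<in> carrier G" "a \<in> carrier G" "b \<in> carrier G"
  shows "conjugate g a \<otimes> conjugate g b = conjugate g b \<otimes> conjugate g a"
  using assms by (simp flip: conjugate_mult)

lemma pow3_mult_conjugate:
  assumes "w \<in> carrier G" "t \<in> carrier G"
  shows "(w \<otimes> t) [^] (3::nat) =
    w \<otimes> conjugate t w \<otimes> conjugate t (conjugate t w) \<otimes> t [^] (3::nat)"
  using assms by (simp add: conjugate_def numeral_3_eq_3 m_assoc)

definition splitting :: "('a \<Rightarrow> 'a) \<Rightarrow> 'a \<Rightarrow> bool" where
  "splitting \<sigma> w \<longleftrightarrow> w \<otimes> \<sigma> w \<otimes> \<sigma> (\<sigma> w) = \<one>"

lemma splitting_conjugate_if_cubes: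
  assumes "w \<in> carrier G" "t \<in> carrier G"
    and "t [^] (3::nat) = \<one>" "(w \<otimes> t) [^] (3::nat) = \<one>"
  shows "splitting (conjugate t) w"
  using pow3_mult_conjugate[OF assms(1,2)] assms by (simp add: splitting_def)

lemma splitting_commute:
  assumes \<sigma>: "\<sigma> \<in> hom G G" and y: "y \<in> carrier G"
    and "splitting \<sigma> y" "splitting \<sigma> (inv y)"
  shows "y \<otimes> \<sigma> y = \<sigma> y \<otimes> y" "\<sigma> y \<otimes> \<sigma> (\<sigma> y) = \<sigma> (\<sigma> y) \<otimes> \<sigma> y"
proof -
  interpret \<sigma>: group_hom G G \<sigma>
    using \<sigma> by (simp add: group_hom_def group_hom_axioms_def is_group)
  have y': "\<sigma> y \<in> carrier G" "\<sigma> (\<sigma> y) \<in> carrier G" using y by simp_all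
  have fwd: "y \<otimes> \<sigma> y \<otimes> \<sigma> (\<sigma> y) = \<one>" using assms(3) by (simp add: splitting_def)
  have "inv (\<sigma> (\<sigma> y) \<otimes> \<sigma> y \<otimes> y) = \<one>"
    using assms(4) y by (simp add: splitting_def inv_mult_group m_assoc)
  then have bwd: "\<sigma> (\<sigma> y) \<otimes> \<sigma> y \<otimes> y = \<one>"
    using y by (metis inv_eq_1_iff m_closed y')
  show "y \<otimes> \<sigma> y = \<sigma> y \<otimes> y"
    using commute_if_mult3_eq_one_reverse[OF fwd bwd y y'] .
  show "\<sigma> y \<otimes> \<sigma> (\<sigma> y) = \<sigma> (\<sigma> y) \<otimes> \<sigma> y"
    using commute_if_mult3_eq_one_reverse[OF mult3_eq_one_rotate[OF fwd y y']
        mult3_eq_one_rotate[OF mult3_eq_one_rotate[OF bwd y'(2,1) y]]] y y' by simp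
qed

(* Used with A, B, C and P, Q, R the conjugates of y, \<sigma> y, \<sigma>^2 y by x and by x (\<sigma> x),
   and with y2 = \<sigma>^2 y. *)
lemma commute_of_triple_relations:
  assumes ABC: "A \<otimes> B \<otimes> C = \<one>" and AB: "A \<otimes> B = B \<otimes> A"
    and PQR: "P \<otimes> Q \<otimes> R = \<one>" and QR: "Q \<otimes> R = R \<otimes> Q"
    and yBR: "y \<otimes> B \<otimes> R = \<one>" and AQy2: "A \<otimes> Q \<otimes> y2 = \<one>"
    and yCPy2: "y \<otimes> inv C \<otimes> inv P \<otimes> y2 = \<one>"
    and carrier: "y \<in> carrier G" "y2 \<in> carrier G" "A \<in> carrier G" "B \<in> carrier G"
      "C \<in> carrier G" "P \<in> carrier G" "Q \<in> carrier G" "R \<in> carrier G"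
  shows "A \<otimes> y = y \<otimes> A"
proof -
  note [simp] = carrier
  have inv_y: "inv y = B \<otimes> R"
    using yBR by (intro inv_eq_if_mult_eq_one) (simp_all add: m_assoc)
  have inv_y2: "inv y2 = A \<otimes> Q"
    using AQy2 by (intro inv_equality) simp_all
  have inv_P: "inv P = Q \<otimes> R"
    using PQR by (intro inv_eq_if_mult_eq_one) (simp_all add: m_assoc)
  have "C \<otimes> (B \<otimes> A) = \<one>"
    using mult3_eq_one_rotate[OF mult3_eq_one_rotate[OF ABC]] AB by (simp add: m_assoc)
  then have CB: "C \<otimes> B = inv A"
    by (intro inv_equality[symmetric]) (simp_all add: m_assoc)
  have "inv C \<otimes> inv P \<otimes> y2 \<otimes> y = \<one>"
    using mult3_eq_one_rotate[of y "inv C \<otimes> inv P" y2] yCPy2 by (simp add: m_assoc)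
  then have "C = inv P \<otimes> y2 \<otimes> y"
    by (metis inv_eq_if_mult_eq_one inv_inv m_assoc m_closed inv_closed carrier)
  then have "C = Q \<otimes> R \<otimes> inv Q \<otimes> inv A \<otimes> inv R \<otimes> inv B"
    using inv_mult_group[of A Q] inv_mult_group[of B R]
    by (simp add: inv_P flip: inv_y inv_y2) (simp add: m_assoc)
  then have "C \<otimes> B = R \<otimes> Q \<otimes> inv Q \<otimes> inv A \<otimes> inv R"
    by (simp add: QR m_assoc)
  then have "R \<otimes> inv A \<otimes> inv R = inv A"
    using CB by (simp add: m_assoc)
  then have RA: "R \<otimes> inv A = inv A \<otimes> R"
    by (metis inv_solve_right' inv_closed m_closed carrier(3,8))
  then have AR: "A \<otimes> R = R \<otimes> A"
    using commute_inv[OF RA] by simp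
  have "A \<otimes> inv y = B \<otimes> (A \<otimes> R)"
    by (simp add: inv_y AB flip: m_assoc)
  also have "\<dots> = inv y \<otimes> A"
    by (simp add: inv_y AR m_assoc)
  finally have "A \<otimes> inv y = inv y \<otimes> A" .
  from commute_inv[OF this] show ?thesis
    by simp
qed

lemma commute_conjugate_if_splitting:
  assumes \<sigma>: "\<sigma> \<in> hom G G" and x: "x \<in> carrier G" and y: "y \<in> carrier G"
    and split: "splitting \<sigma> y" "splitting \<sigma> (inv y)" "splitting \<sigma> x"
      "splitting \<sigma> (y \<otimes> x)" "splitting \<sigma> (x \<otimes> y)" "splitting \<sigma> (y \<otimes> x \<otimes> y)"
  shows "y \<otimes> conjugate x y = conjugate x y \<otimes> y"
proof -
  interpret \<sigma>: group_hom G G \<sigma>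
    using \<sigma> by (simp add: group_hom_def group_hom_axioms_def is_group)
  define y1 y2 where "y1 = \<sigma> y" and "y2 = \<sigma> y1"
  define q where "q = x \<otimes> \<sigma> x"
  have [simp]: "y1 \<in> carrier G" "y2 \<in> carrier G" "q \<in> carrier G"
    using x y by (simp_all add: y1_def y2_def q_def)
  have yy: "y \<otimes> y1 \<otimes> y2 = \<one>" using split(1) by (simp add: splitting_def y1_def y2_def)
  have yy1: "y \<otimes> y1 = y1 \<otimes> y" and y1y2: "y1 \<otimes> y2 = y2 \<otimes> y1"
    using splitting_commute[OF \<sigma> y split(1,2)] by (simp_all add: y1_def y2_def)
  have "q \<otimes> \<sigma> (\<sigma> x) = \<one>" using split(3) by (simp add: splitting_def q_def)
  then have x2: "inv (x \<otimes> \<sigma> x) = \<sigma> (\<sigma> x)"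
    using x by (metis inv_comm inv_equality \<sigma>.hom_closed \<open>q \<in> carrier G\<close> q_def)
  define A B C where "A = conjugate x y" and "B = conjugate x y1" and "C = conjugate x y2"
  define P Q R where "P = conjugate q y" and "Q = conjugate q y1" and "R = conjugate q y2"
  have [simp]: "A \<in> carrier G" "B \<in> carrier G" "C \<in> carrier G"
    "P \<in> carrier G" "Q \<in> carrier G" "R \<in> carrier G"
    using x y by (simp_all add: A_def B_def C_def P_def Q_def R_def)
  have ABC: "A \<otimes> B \<otimes> C = \<one>"
    using conjugate_mult3_eq_one[OF yy x] y by (simp add: A_def B_def C_def)
  have AB: "A \<otimes> B = B \<otimes> A"
    using conjugate_commute[OF yy1 x] y by (simp add: A_def B_def)
  have PQR: "P \<otimes> Q \<otimes> R = \<one>"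
    using conjugate_mult3_eq_one[OF yy] y by (simp add: P_def Q_def R_def)
  have QR: "Q \<otimes> R = R \<otimes> Q"
    using conjugate_commute[OF y1y2] by (simp add: Q_def R_def)
  have yBR: "y \<otimes> B \<otimes> R = \<one>"
    using split(4) x y
    by (simp add: splitting_def B_def R_def conjugate_def q_def x2 y1_def y2_def m_assoc)
  have AQy2: "A \<otimes> Q \<otimes> y2 = \<one>"
    using split(5) x y
    by (simp add: splitting_def A_def Q_def conjugate_def q_def x2 y1_def y2_def m_assoc)
  have "y \<otimes> y1 = inv y2"
    using yy y by (intro inv_equality[symmetric]) simp_all
  moreover have "y1 \<otimes> y2 = inv y"
    using yy y by (intro inv_eq_if_mult_eq_one[symmetric]) (simp_all add: m_assoc)
  moreover have "y \<otimes> x \<otimes> (y \<otimes> y1) \<otimes> \<sigma> x \<otimes> (y1 \<otimes> y2) \<otimes> \<sigma> (\<sigma> x) \<otimes> y2 = \<one>"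
    using split(6) x y by (simp add: splitting_def y1_def y2_def m_assoc)
  ultimately have "y \<otimes> x \<otimes> inv y2 \<otimes> \<sigma> x \<otimes> inv y \<otimes> \<sigma> (\<sigma> x) \<otimes> y2 = \<one>"
    by simp
  then have "y \<otimes> inv C \<otimes> inv P \<otimes> y2 = \<one>"
    using x y by (simp add: C_def P_def conjugate_inv) (simp add: conjugate_def q_def x2 m_assoc)
  then have "A \<otimes> y = y \<otimes> A"
    by (rule commute_of_triple_relations[OF ABC AB PQR QR yBR AQy2]) (simp_all add: y)
  then show ?thesis
    by (simp add: A_def)
qed

lemma comm3_eq_one_if_commute_conjugate:
  assumes x: "x \<in> carrier G" and y: "y \<in> carrier G"
    and commute: "y \<otimes> conjugate (inv x) y = conjugate (inv x) y \<otimes> y"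
  shows "comm3 G x y y = \<one>"
proof -
  have "comm G x y = inv (conjugate (inv x) y) \<otimes> y"
    using x y by (simp add: comm_def conjugate_inv) (simp add: conjugate_def)
  moreover have "y \<otimes> inv (conjugate (inv x) y) = inv (conjugate (inv x) y) \<otimes> y"
    using commute_inv[OF commute] x y by simp
  ultimately have "comm G x y \<otimes> y = y \<otimes> comm G x y"
    using x y by (simp flip: m_assoc)
  then show ?thesis
    using x y by (simp add: comm3_def comm_eq_one_iff_commute)
qed

lemma k_large_common_translate:
  assumes "k_large k G X" "X \<subseteq> carrier G" "0 < k" "\<And>i. i < k \<Longrightarrow> g i \<in> carrier G"
  obtains t where "t \<in> carrier G" "\<And>i. i < k \<Longrightarrow> g i \<otimes> t \<in> X"
proof -
  have "(\<Inter>i<k. inv (g i) <# X) \<noteq> {}"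
    using assms(1,4) by (simp add: k_large_def)
  then obtain t where t: "\<And>i. i < k \<Longrightarrow> t \<in> inv (g i) <# X"
    by blast
  have translate: "g i \<otimes> t \<in> X" if "i < k" for i
    using t[OF that] assms(2) assms(4)[OF that] by (auto simp: l_coset_def)
  moreover have "t \<in> carrier G"
    using t[OF assms(3)] assms(2) assms(4)[OF assms(3)] by (auto simp: l_coset_def)
  ultimately show ?thesis using that by blast
qed

lemma commute_conjugate_if_cubes_7_large:
  assumes large: "k_large 7 G {z \<in> carrier G. z [^] (3::nat) = \<one>}"
    and x: "x \<in> carrier G" and y: "y \<in> carrier G"
  shows "y \<otimes> conjugate x y = conjugate x y \<otimes> y"
proof -
  let ?ws = "[\<one>, y, inv y, x, y \<otimes> x, x \<otimes> y, y \<otimes> x \<otimes> y]"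
  have ws: "set ?ws \<subseteq> carrier G" using x y by simp
  have ws_closed: "?ws ! i \<in> carrier G" if "i < 7" for i
    using subsetD[OF ws nth_mem[of i ?ws]] that by simp
  obtain t where t: "t \<in> carrier G"
    and translates: "\<And>i. i < 7 \<Longrightarrow> ?ws ! i \<otimes> t \<in> {z \<in> carrier G. z [^] (3::nat) = \<one>}"
    by (rule k_large_common_translate[OF large, of "(!) ?ws"]) (auto intro: ws_closed)
  have cubes: "(?ws ! i \<otimes> t) [^] (3::nat) = \<one>" if "i < 7" for i
    using translates[OF that] by simp
  have t3: "t [^] (3::nat) = \<one>" using cubes[of 0] t by simp
  have split: "splitting (conjugate t) (?ws ! i)" if "i < 7" for i
    using splitting_conjugate_if_cubes[OF ws_closed[OF that] t t3 cubes[OF that]] .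
  show ?thesis
    using split[of 1] split[of 2] split[of 3] split[of 4] split[of 5] split[of 6]
    by (intro commute_conjugate_if_splitting[OF conjugate_hom[OF t] x y]) simp_all
qed

end

theorem theorem4p3:
  fixes G :: "('a, 'b) monoid_scheme"
  assumes "group G"
    and "k_large 7 G {x \<in> carrier G. x [^]\<^bsub>G\<^esub> (3::nat) = \<one>\<^bsub>G\<^esub>}"
  shows "two_engel G"
proof -
  interpret group G by fact
  show ?thesis
    unfolding two_engel_def
  proof (intro ballI)
    fix x y assume x: "x \<in> carrier G" and y: "y \<in> carrier G"
    show "comm3 G x y y = \<one>\<^bsub>G\<^esub>"
      using commute_conjugate_if_cubes_7_large[OF assms(2) inv_closed[OF x] y]
      by (rule comm3_eq_one_if_commute_conjugate[OF x y])
  qed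
qed

end
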